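(* Let $D$ be a friendship digraph of order $n$. Then for each vertex $v\in V(D)$: (a) $d^+(v)=d^-(v)$; and (b) $\sum_{u\in N^+(v)}\bigl(d^-(u)-1\bigr)=n-1$.
   Context: All digraphs are finite and have neither loops nor parallel arcs (a pair of opposite arcs $(u,v)$ and $(v,u)$ is allowed). $N^+(v)$, $N^-(v)$ are the out- and in-neighborhoods of $v$, and $d^+(v)=|N^+(v)|$, $d^-(v)=|N^-(v)|$. A friendship digraph is a nontrivial digraph (at least two vertices) in which any two distinct vertices have exactly one common out-neighbor. *)

theory Defs
  imports Main
begin

text \<open>A digraph is given by a vertex set V and an arc relation A (A u v means arc (u,v)).
  Loops are excluded; parallel arcs are impossible by representation; opposite arcs allowed.\<close>

definition digraph :: "'a set \<Rightarrow> ('a \<Rightarrow> 'a \<Rightarrow> bool) \<Rightarrow> bool" where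
  "digraph V A \<longleftrightarrow> finite V \<and> (\<forall>u v. A u v \<longrightarrow> u \<in> V \<and> v \<in> V \<and> u \<noteq> v)"

definition out_nbrs :: "'a set \<Rightarrow> ('a \<Rightarrow> 'a \<Rightarrow> bool) \<Rightarrow> 'a \<Rightarrow> 'a set" where
  "out_nbrs V A v = {u \<in> V. A v u}"

definition in_nbrs :: "'a set \<Rightarrow> ('a \<Rightarrow> 'a \<Rightarrow> bool) \<Rightarrow> 'a \<Rightarrow> 'a set" where
  "in_nbrs V A v = {u \<in> V. A u v}"

definition outdeg :: "'a set \<Rightarrow> ('a \<Rightarrow> 'a \<Rightarrow> bool) \<Rightarrow> 'a \<Rightarrow> nat" where
  "outdeg V A v = card (out_nbrs V A v)"

definition indeg :: "'a set \<Rightarrow> ('a \<Rightarrow> 'a \<Rightarrow> bool) \<Rightarrow> 'a \<Rightarrow> nat" where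
  "indeg V A v = card (in_nbrs V A v)"

definition friendship_digraph :: "'a set \<Rightarrow> ('a \<Rightarrow> 'a \<Rightarrow> bool) \<Rightarrow> bool" where
  "friendship_digraph V A \<longleftrightarrow> digraph V A \<and> card V \<ge> 2 \<and>
     (\<forall>u\<in>V. \<forall>v\<in>V. u \<noteq> v \<longrightarrow> (\<exists>!w. w \<in> out_nbrs V A u \<inter> out_nbrs V A v))"

end

theory Submission
  imports Defs
begin

text \<open>For an in-neighbour \<open>x\<close> of \<open>v\<close>, let \<open>c x\<close> be the common out-neighbour of \<open>x\<close> and \<open>v\<close>.
  If \<open>c x = c y\<close> for distinct in-neighbours \<open>x, y\<close>, then \<open>x\<close> and \<open>y\<close> would have the two distinct
  common out-neighbours \<open>v\<close> and \<open>c x\<close>; so \<open>c\<close> injects \<open>N\<^sup>-(v)\<close> into \<open>N\<^sup>+(v)\<close> and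
  \<open>d\<^sup>-(v) \<le> d\<^sup>+(v)\<close>. Since in- and out-degrees have the same total, equality holds everywhere.
  For (b), every \<open>u \<noteq> v\<close> has exactly one common out-neighbour \<open>w \<in> N\<^sup>+(v)\<close> with \<open>v\<close>, so the
  sets \<open>N\<^sup>-(w) - {v}\<close> for \<open>w \<in> N\<^sup>+(v)\<close> partition \<open>V - {v}\<close>.\<close>

lemma friendship_digraph_digraph: "friendship_digraph V A \<Longrightarrow> digraph V A"
  by (simp add: friendship_digraph_def)

lemma digraph_finite: "digraph V A \<Longrightarrow> finite V"
  by (simp add: digraph_def)

lemma digraph_arcD:
  assumes "digraph V A" and "A u v"
  shows "u \<in> V" "v \<in> V" "u \<noteq> v"
  using assms by (auto simp: digraph_def)

lemma finite_out_nbrs: "finite V \<Longrightarrow> finite (out_nbrs V A v)"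
  by (simp add: out_nbrs_def)

lemma finite_in_nbrs: "finite V \<Longrightarrow> finite (in_nbrs V A v)"
  by (simp add: in_nbrs_def)

lemma sum_outdeg_eq_sum_indeg:
  assumes "finite V"
  shows "(\<Sum>v\<in>V. outdeg V A v) = (\<Sum>v\<in>V. indeg V A v)"
proof -
  have "(\<Sum>v\<in>V. outdeg V A v) = (\<Sum>v\<in>V. \<Sum>u\<in>V. if A v u then 1 else 0)"
    using assms by (simp add: outdeg_def out_nbrs_def sum.inter_filter[symmetric])
  also have "\<dots> = (\<Sum>u\<in>V. \<Sum>v\<in>V. if A v u then 1 else 0)"
    by (rule sum.swap)
  also have "\<dots> = (\<Sum>v\<in>V. indeg V A v)"
    using assms by (simp add: indeg_def in_nbrs_def sum.inter_filter[symmetric])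
  finally show ?thesis .
qed

lemma friendship_common_out_nbr_exists:
  assumes "friendship_digraph V A" and "u \<in> V" "v \<in> V" "u \<noteq> v"
  obtains w where "w \<in> V" "A u w" "A v w"
proof -
  have "\<exists>!w. w \<in> out_nbrs V A u \<inter> out_nbrs V A v"
    using assms by (simp add: friendship_digraph_def)
  then show ?thesis
    using that by (auto simp: out_nbrs_def)
qed

lemma friendship_common_out_nbr_unique:
  assumes F: "friendship_digraph V A" and "u \<in> V" "v \<in> V" "u \<noteq> v"
    and "A u w" "A v w" "A u w'" "A v w'"
  shows "w = w'"
proof -
  have "\<exists>!w. w \<in> out_nbrs V A u \<inter> out_nbrs V A v"
    using F assms(2-4) by (simp add: friendship_digraph_def)
  moreover have "w \<in> out_nbrs V A u \<inter> out_nbrs V A v" "w' \<in> out_nbrs V A u \<inter> out_nbrs V A v"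
    using digraph_arcD[OF friendship_digraph_digraph[OF F]] assms(5-8)
    by (auto simp: out_nbrs_def)
  ultimately show ?thesis by blast
qed

lemma friendship_indeg_le_outdeg:
  assumes F: "friendship_digraph V A" and v: "v \<in> V"
  shows "indeg V A v \<le> outdeg V A v"
proof -
  have D: "digraph V A" using F by (rule friendship_digraph_digraph)
  define c where "c x = (SOME w. w \<in> V \<and> A x w \<and> A v w)" for x
  have c: "c x \<in> V \<and> A x (c x) \<and> A v (c x)" if "x \<in> in_nbrs V A v" for x
  proof -
    have "x \<in> V" "x \<noteq> v" using that digraph_arcD[OF D] by (auto simp: in_nbrs_def)
    then obtain w where "w \<in> V \<and> A x w \<and> A v w"
      using friendship_common_out_nbr_exists[OF F _ v] by metis
    then show ?thesis unfolding c_def by (rule someI)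
  qed
  have "inj_on c (in_nbrs V A v)"
  proof (rule inj_onI, rule ccontr)
    fix x y
    assume x: "x \<in> in_nbrs V A v" and y: "y \<in> in_nbrs V A v" and "c x = c y" and "x \<noteq> y"
    then have "v = c x"
      using c[OF x] c[OF y] friendship_common_out_nbr_unique[OF F, of x y v "c x"]
      by (auto simp: in_nbrs_def)
    with c[OF x] digraph_arcD[OF D] show False by blast
  qed
  moreover have "c ` in_nbrs V A v \<subseteq> out_nbrs V A v"
    using c by (auto simp: out_nbrs_def)
  ultimately show ?thesis
    unfolding indeg_def outdeg_def
    by (intro card_inj_on_le finite_out_nbrs digraph_finite[OF D])
qed

lemma friendship_outdeg_eq_indeg:
  assumes F: "friendship_digraph V A" and "v \<in> V"
  shows "outdeg V A v = indeg V A v"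
  using sum_mono_inv[OF sum_outdeg_eq_sum_indeg[symmetric] friendship_indeg_le_outdeg[OF F] assms(2)]
    digraph_finite[OF friendship_digraph_digraph[OF F]]
  by simp

lemma friendship_Diff_singleton_eq_UN_in_nbrs:
  assumes F: "friendship_digraph V A" and v: "v \<in> V"
  shows "V - {v} = (\<Union>w\<in>out_nbrs V A v. in_nbrs V A w - {v})"
proof
  show "V - {v} \<subseteq> (\<Union>w\<in>out_nbrs V A v. in_nbrs V A w - {v})"
  proof
    fix u assume u: "u \<in> V - {v}"
    then obtain w where "w \<in> V" "A u w" "A v w"
      using friendship_common_out_nbr_exists[OF F _ v] by blast
    with u show "u \<in> (\<Union>w\<in>out_nbrs V A v. in_nbrs V A w - {v})"
      by (auto simp: in_nbrs_def out_nbrs_def)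
  qed
qed (auto simp: in_nbrs_def)

lemma friendship_in_nbrs_Diff_disjoint:
  assumes F: "friendship_digraph V A" and v: "v \<in> V"
    and w: "w \<in> out_nbrs V A v" and w': "w' \<in> out_nbrs V A v" and "w \<noteq> w'"
  shows "(in_nbrs V A w - {v}) \<inter> (in_nbrs V A w' - {v}) = {}"
proof (rule ccontr)
  assume "(in_nbrs V A w - {v}) \<inter> (in_nbrs V A w' - {v}) \<noteq> {}"
  then obtain u where "u \<in> V" "u \<noteq> v" "A u w" "A u w'"
    by (auto simp: in_nbrs_def)
  moreover have "A v w" "A v w'"
    using w w' by (auto simp: out_nbrs_def)
  ultimately have "w = w'"
    using friendship_common_out_nbr_unique[OF F _ v] by blast
  with \<open>w \<noteq> w'\<close> show False ..
qed

lemma friendship_sum_indeg_out_nbrs: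
  assumes F: "friendship_digraph V A" and v: "v \<in> V"
  shows "(\<Sum>w\<in>out_nbrs V A v. int (indeg V A w) - 1) = int (card V) - 1"
proof -
  have fin: "finite V"
    using F by (intro digraph_finite friendship_digraph_digraph)
  have card_fibre: "int (card (in_nbrs V A w - {v})) = int (indeg V A w) - 1"
    if "w \<in> out_nbrs V A v" for w
  proof -
    have "v \<in> in_nbrs V A w"
      using that v by (simp add: in_nbrs_def out_nbrs_def)
    then have "indeg V A w \<ge> 1" "card (in_nbrs V A w - {v}) = indeg V A w - 1"
      using finite_in_nbrs[OF fin] by (auto simp: indeg_def card_gt_0_iff Suc_le_eq)
    then show ?thesis by (simp add: of_nat_diff)
  qed
  have "card V \<ge> 1"
    using fin v by (auto simp: Suc_le_eq card_gt_0_iff)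
  then have "int (card V) - 1 = int (card (V - {v}))"
    using fin v by (simp add: of_nat_diff)
  also have "\<dots> = (\<Sum>w\<in>out_nbrs V A v. int (card (in_nbrs V A w - {v})))"
    unfolding friendship_Diff_singleton_eq_UN_in_nbrs[OF F v]
    by (subst card_UN_disjoint)
       (simp_all add: finite_out_nbrs finite_in_nbrs fin friendship_in_nbrs_Diff_disjoint[OF F v])
  also have "\<dots> = (\<Sum>w\<in>out_nbrs V A v. int (indeg V A w) - 1)"
    using card_fibre by simp
  finally show ?thesis by simp
qed

theorem proposition2p2:
  fixes V :: "'a set" and A :: "'a \<Rightarrow> 'a \<Rightarrow> bool" and n :: nat
  assumes "friendship_digraph V A"
    and "card V = n"
  shows "\<forall>v\<in>V. outdeg V A v = indeg V A v \<and>
           (\<Sum>u\<in>out_nbrs V A v. int (indeg V A u) - 1) = int n - 1"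
  using friendship_outdeg_eq_indeg[OF assms(1)] friendship_sum_indeg_out_nbrs[OF assms(1)] assms(2)
  by blast

end
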